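(* Let $F$ be an admissible fundamental matrix on $J$. Then there is a constant $C>0$ such that \[ \|\alpha_F^k(a,g)\|_{L^\infty(-1,1)}\le C\|g\|_Y \] for all $(a,g)\in J\times Y$ and all $k\in\{1,2,3,4\}$.
   Context: Notation: $A^j{}_k$ is the entry in row $j$, column $k$; a prime denotes $\partial_y$; $\varphi(y,\alpha):=-\frac{2\alpha}{(1-y)^2}+\frac{2\alpha}{1-y}-\frac{2}{\alpha}\log(1-y)$; each occurrence of $\mathcal P(y)$ denotes some polynomial in $y$ with complex coefficients independent of $a$ (different occurrences may differ). Let $a_*\in\mathbb{R}\setminus\{0\}$, $J\subset\mathbb{R}\setminus\{-a_*\}$ compact. An admissible right fundamental matrix $F_R(y,a)$, $(y,a)\in[0,1)\times J$, is the real $4\times4$ matrix with $j$-th column $(\Re f_j,\Im f_j,\Re f_j',\Im f_j')^T(y,a)$, where $\det F_R\neq0$ on $[0,1)\times J$ and $f_1=1+\frac{a_*+a+i}{2(a_*+a)}(1-y)+(1-y)^2\mathcal P(y)$, $f_2=i+i\frac{a_*+a+i}{2(a_*+a)}(1-y)+(1-y)^2\mathcal P(y)$, $f_3=e^{i\varphi(y,a_*+a)}(1-y)[1+\frac{2(a_*+a)-i}{2(a_*+a)}(1-y)+(1-y)^2\mathcal P(y)]+e^{-i\varphi(y,a_*+a)}(1-y)^5\mathcal P(y)$, $f_4=i\times$(the same expression with possibly different polynomials). An admissible left fundamental matrix $F_L(y)$, $y\in(-1,0]$, is the real $4\times4$ matrix with columns $(\Re g_j,\Im g_j,\Re g_j',\Im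 g_j')^T$, $\det F_L\neq0$ on $(-1,0]$, $g_1=1+(1+y)\mathcal P(y)$, $g_2=i+(1+y)\mathcal P(y)$, $g_3=\frac{1}{1+y}[1+(1+y)\mathcal P(y)]$, $g_4=\frac{i}{1+y}[1+(1+y)\mathcal P(y)]$. With $M_F(a):=F_L(0)^{-1}F_R(0,a)$, the admissible fundamental matrix on $J$ is $F(y,a):=F_L(y)M_F(a)$ for $y\in(-1,0]$, $F(y,a):=F_R(y,a)$ for $y\in(0,1)$, assuming $M_F(a)^3{}_1\neq0$ for all $a\in J$. $Y$ is the space of $f\in C(-1,1)$ with $(1+y)(1-y)^2f(y)$ extending continuously to $[-1,1]$, $\|f\|_Y:=\sup_{(-1,1)}(1+y)(1-y)^2|f(y)|$. For $g\in Y$, $a\in J$, $y\in(-1,1)$: $\alpha_F^k(a,g)(y):=F^{-1}(y,a)^k{}_3\Re g(y)+F^{-1}(y,a)^k{}_4\Im g(y)$, where $F^{-1}(y,a)^k{}_\ell$ denotes the $(k,\ell)$ entry of $F(y,a)^{-1}$. *)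

theory Defs
  imports "HOL-Analysis.Analysis" "HOL-Computational_Algebra.Polynomial"
begin

definition phi :: "real \<Rightarrow> real \<Rightarrow> real" where
  "phi y al = - 2 * al / (1 - y)^2 + 2 * al / (1 - y) - (2 / al) * ln (1 - y)"

definition colvec :: "(real \<Rightarrow> complex) \<Rightarrow> real \<Rightarrow> real^4" where
  "colvec f y = vector [Re (f y), Im (f y), deriv (\<lambda>t. Re (f t)) y, deriv (\<lambda>t. Im (f t)) y]"

definition fundmat :: "(real \<Rightarrow> complex) \<Rightarrow> (real \<Rightarrow> complex) \<Rightarrow> (real \<Rightarrow> complex)
    \<Rightarrow> (real \<Rightarrow> complex) \<Rightarrow> real \<Rightarrow> real^4^4" where
  "fundmat f1 f2 f3 f4 y = transpose (vector [colvec f1 y, colvec f2 y, colvec f3 y, colvec f4 y])"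

definition fR1 :: "real \<Rightarrow> (nat \<Rightarrow> complex poly) \<Rightarrow> real \<Rightarrow> real \<Rightarrow> complex" where
  "fR1 as P a y = (let al = complex_of_real (as + a) in
     1 + (al + \<i>) / (2 * al) * of_real (1 - y) + of_real ((1 - y)^2) * poly (P 1) (of_real y))"

definition fR2 :: "real \<Rightarrow> (nat \<Rightarrow> complex poly) \<Rightarrow> real \<Rightarrow> real \<Rightarrow> complex" where
  "fR2 as P a y = (let al = complex_of_real (as + a) in
     \<i> + \<i> * (al + \<i>) / (2 * al) * of_real (1 - y) + of_real ((1 - y)^2) * poly (P 2) (of_real y))"

definition fR34 :: "real \<Rightarrow> complex poly \<Rightarrow> complex poly \<Rightarrow> real \<Rightarrow> real \<Rightarrow> complex" where
  "fR34 as p q a y = (let al = complex_of_real (as + a) in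
     cis (phi y (as + a)) * of_real (1 - y) *
       (1 + (2 * al - \<i>) / (2 * al) * of_real (1 - y) + of_real ((1 - y)^2) * poly p (of_real y))
     + cis (- phi y (as + a)) * of_real ((1 - y)^5) * poly q (of_real y))"

definition fR3 :: "real \<Rightarrow> (nat \<Rightarrow> complex poly) \<Rightarrow> real \<Rightarrow> real \<Rightarrow> complex" where
  "fR3 as P a y = fR34 as (P 3) (P 4) a y"

definition fR4 :: "real \<Rightarrow> (nat \<Rightarrow> complex poly) \<Rightarrow> real \<Rightarrow> real \<Rightarrow> complex" where
  "fR4 as P a y = \<i> * fR34 as (P 5) (P 6) a y"

definition FR :: "real \<Rightarrow> (nat \<Rightarrow> complex poly) \<Rightarrow> real \<Rightarrow> real \<Rightarrow> real^4^4" where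
  "FR as P y a = fundmat (fR1 as P a) (fR2 as P a) (fR3 as P a) (fR4 as P a) y"

definition gL1 :: "(nat \<Rightarrow> complex poly) \<Rightarrow> real \<Rightarrow> complex" where
  "gL1 Q y = 1 + of_real (1 + y) * poly (Q 1) (of_real y)"
definition gL2 :: "(nat \<Rightarrow> complex poly) \<Rightarrow> real \<Rightarrow> complex" where
  "gL2 Q y = \<i> + of_real (1 + y) * poly (Q 2) (of_real y)"
definition gL3 :: "(nat \<Rightarrow> complex poly) \<Rightarrow> real \<Rightarrow> complex" where
  "gL3 Q y = 1 / of_real (1 + y) * (1 + of_real (1 + y) * poly (Q 3) (of_real y))"
definition gL4 :: "(nat \<Rightarrow> complex poly) \<Rightarrow> real \<Rightarrow> complex" where
  "gL4 Q y = \<i> / of_real (1 + y) * (1 + of_real (1 + y) * poly (Q 4) (of_real y))"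

definition FL :: "(nat \<Rightarrow> complex poly) \<Rightarrow> real \<Rightarrow> real^4^4" where
  "FL Q y = fundmat (gL1 Q) (gL2 Q) (gL3 Q) (gL4 Q) y"

definition MF :: "real \<Rightarrow> (nat \<Rightarrow> complex poly) \<Rightarrow> (nat \<Rightarrow> complex poly) \<Rightarrow> real \<Rightarrow> real^4^4" where
  "MF as P Q a = matrix_inv (FL Q 0) ** FR as P 0 a"

definition Ffund :: "real \<Rightarrow> (nat \<Rightarrow> complex poly) \<Rightarrow> (nat \<Rightarrow> complex poly) \<Rightarrow> real \<Rightarrow> real \<Rightarrow> real^4^4" where
  "Ffund as P Q y a = (if y \<le> 0 then FL Q y ** MF as P Q a else FR as P y a)"

definition admissible :: "real \<Rightarrow> real set \<Rightarrow> (nat \<Rightarrow> complex poly) \<Rightarrow> (nat \<Rightarrow> complex poly) \<Rightarrow> bool" where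
  "admissible as J P Q \<longleftrightarrow>
     as \<noteq> 0 \<and> compact J \<and> - as \<notin> J \<and>
     (\<forall>y \<in> {0..<1}. \<forall>a \<in> J. det (FR as P y a) \<noteq> 0) \<and>
     (\<forall>y \<in> {-1<..0}. det (FL Q y) \<noteq> 0) \<and>
     (\<forall>a \<in> J. MF as P Q a $ 3 $ 1 \<noteq> 0)"

definition Yspace :: "(real \<Rightarrow> complex) set" where
  "Yspace = {f. continuous_on {-1<..<1} f \<and>
     (\<exists>h. continuous_on {-1..1} h \<and>
          (\<forall>y \<in> {-1<..<1}. h y = of_real ((1 + y) * (1 - y)^2) * f y))}"

definition normY :: "(real \<Rightarrow> complex) \<Rightarrow> real" where
  "normY f = (SUP y \<in> {-1<..<1}. (1 + y) * (1 - y)^2 * cmod (f y))"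

definition alphaF :: "real \<Rightarrow> (nat \<Rightarrow> complex poly) \<Rightarrow> (nat \<Rightarrow> complex poly)
    \<Rightarrow> 4 \<Rightarrow> real \<Rightarrow> (real \<Rightarrow> complex) \<Rightarrow> real \<Rightarrow> real" where
  "alphaF as P Q k a g y =
     matrix_inv (Ffund as P Q y a) $ k $ 3 * Re (g y) + matrix_inv (Ffund as P Q y a) $ k $ 4 * Im (g y)"

end

theory Submission
  imports Defs
begin

text \<open>
  Only columns 3 and 4 of the inverse fundamental matrix enter \<open>alphaF\<close>, so it suffices to show
  that these columns are \<open>O((1 + y) (1 - y)^2)\<close> uniformly in \<open>a \<in> J\<close>: this is exactly the
  weight in the norm of \<open>Y\<close>.

  Near \<open>y = -1\<close> the solutions \<open>g_3, g_4\<close> blow up like \<open>1 / (1 + y)\<close>. Multiplying columns 3, 4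
  and rows 3, 4 of \<open>FL\<close> by \<open>1 + y\<close> gives a matrix that is continuous and invertible on
  \<open>[-1, 0]\<close>, hence has bounded inverse, and columns 3, 4 of \<open>FL\<^sup>-\<^sup>1\<close> are \<open>O(1 + y)\<close>.

  Near \<open>y = 1\<close> the derivative rows of \<open>FR\<close> blow up like \<open>(1 - y)\<^sup>-\<^sup>2\<close>, and the phase
  \<open>cis (phi y (as + a))\<close> has no limit. Multiplying rows 3, 4 by \<open>(1 - y)^2\<close> and replacing the
  phase by an independent point \<open>z\<close> of the unit circle gives a matrix that is continuous on
  \<open>[0, 1] \<times> J \<times> S\<^sup>1\<close> and invertible on the (compact) closure of the graph of the phase;
  so columns 3, 4 of \<open>FR\<^sup>-\<^sup>1\<close> are \<open>O((1 - y)^2)\<close>.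

  On \<open>(-1, 0]\<close> the glued inverse is \<open>MF\<^sup>-\<^sup>1 FL\<^sup>-\<^sup>1\<close>, and \<open>MF\<^sup>-\<^sup>1\<close> is continuous
  on the compact set \<open>J\<close>, hence bounded.
\<close>

section \<open>Inverse matrices\<close>

lemma matrix_inv_inverse:
  fixes A :: "'a::semiring_1^'n^'m"
  assumes "invertible A"
  shows "A ** matrix_inv A = mat 1 \<and> matrix_inv A ** A = mat 1"
  using assms unfolding invertible_def matrix_inv_def by (rule someI_ex)

lemmas matrix_inv_right = matrix_inv_inverse[THEN conjunct1]
lemmas matrix_inv_left = matrix_inv_inverse[THEN conjunct2]

lemma matrix_inv_eqI:
  fixes A X :: "'a::field^'n^'n"
  assumes "A ** X = mat 1"
  shows "matrix_inv A = X"
proof -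
  have "invertible A" using assms invertible_right_inverse by blast
  have "matrix_inv A = matrix_inv A ** (A ** X)" using assms by simp
  also have "\<dots> = (matrix_inv A ** A) ** X" by (simp add: matrix_mul_assoc)
  also have "\<dots> = X" using matrix_inv_left[OF \<open>invertible A\<close>] by simp
  finally show ?thesis .
qed

lemma invertible_matrix_inv:
  fixes A :: "'a::field^'n^'n"
  assumes "invertible A"
  shows "invertible (matrix_inv A)"
  using matrix_inv_left[OF assms] invertible_right_inverse by blast

lemma matrix_inv_mult:
  fixes A B :: "'a::field^'n^'n"
  assumes "invertible A" "invertible B"
  shows "matrix_inv (A ** B) = matrix_inv B ** matrix_inv A"
proof (rule matrix_inv_eqI)
  have "A ** B ** (matrix_inv B ** matrix_inv A) = A ** (B ** matrix_inv B) ** matrix_inv A"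
    by (simp add: matrix_mul_assoc)
  then show "A ** B ** (matrix_inv B ** matrix_inv A) = mat 1"
    using matrix_inv_right[OF assms(1)] matrix_inv_right[OF assms(2)] by simp
qed

lemma matrix_scaled_right_inverse:
  fixes N :: "'a::field^'n^'n"
  assumes "invertible N" "\<And>i. s i \<noteq> 0" "\<And>j. t j \<noteq> 0"
  shows "(\<chi> i j. s i * N $ i $ j * t j) ** (\<chi> i j. matrix_inv N $ i $ j / (t i * s j)) = mat 1"
proof -
  have "(\<Sum>m\<in>UNIV. s i * N $ i $ m * t m * (matrix_inv N $ m $ l / (t m * s l)))
      = s i / s l * (N ** matrix_inv N) $ i $ l" for i l
    unfolding matrix_matrix_mult_def sum_distrib_left vec_lambda_beta
    using assms(2,3) by (intro sum.cong) (auto simp: field_simps)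
  then show ?thesis
    using matrix_inv_right[OF assms(1)] assms(2) by (simp add: matrix_matrix_mult_def mat_def vec_eq_iff)
qed

lemma matrix_inv_scaled:
  fixes N :: "'a::field^'n^'n"
  assumes "invertible N" "\<And>i. s i \<noteq> 0" "\<And>j. t j \<noteq> 0"
  shows "matrix_inv (\<chi> i j. s i * N $ i $ j * t j) = (\<chi> i j. matrix_inv N $ i $ j / (t i * s j))"
  using matrix_scaled_right_inverse[OF assms] by (rule matrix_inv_eqI)

lemma invertible_scaled:
  fixes N :: "'a::field^'n^'n"
  assumes "invertible N" "\<And>i. s i \<noteq> 0" "\<And>j. t j \<noteq> 0"
  shows "invertible (\<chi> i j. s i * N $ i $ j * t j)"
  unfolding invertible_right_inverse using matrix_scaled_right_inverse[OF assms] by (rule exI)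

lemma matrix_inv_row_scaled:
  fixes N :: "'a::field^'n^'n"
  assumes "invertible N" "\<And>i. s i \<noteq> 0"
  shows "matrix_inv (\<chi> i j. s i * N $ i $ j) = (\<chi> i j. matrix_inv N $ i $ j / s j)"
  using matrix_inv_scaled[OF assms, of "\<lambda>_. 1"] by simp

lemma invertible_row_scaled:
  fixes N :: "'a::field^'n^'n"
  assumes "invertible N" "\<And>i. s i \<noteq> 0"
  shows "invertible (\<chi> i j. s i * N $ i $ j)"
  using invertible_scaled[OF assms, of "\<lambda>_. 1"] by simp

lemma matrix_inv_cramer:
  fixes A :: "'a::field^'n^'n"
  assumes "invertible A"
  shows "matrix_inv A $ k $ l = det (\<chi> i j. if j = k then (if i = l then 1 else 0) else A $ i $ j) / det A"
proof -
  have "det A \<noteq> 0" using assms invertible_det_nz by blast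
  have "A *v (\<chi> k. matrix_inv A $ k $ l) = (\<chi> i. if i = l then 1 else 0)"
    using matrix_inv_right[OF assms]
    by (simp add: vec_eq_iff mat_def matrix_vector_mult_def matrix_matrix_mult_def)
  from cramer[OF \<open>det A \<noteq> 0\<close>, THEN iffD1, OF this, THEN arg_cong, of "\<lambda>x. x $ k"]
  show ?thesis by (simp only: vec_lambda_beta)
qed

lemma continuous_on_det [continuous_intros]:
  fixes M :: "'a::topological_space \<Rightarrow> real^'n^'n"
  assumes "continuous_on S M"
  shows "continuous_on S (\<lambda>p. det (M p))"
  unfolding det_def by (intro continuous_intros assms)

lemma continuous_on_matrix_mult [continuous_intros]:
  fixes A :: "'a::topological_space \<Rightarrow> real^'m^'n" and B :: "'a \<Rightarrow> real^'p^'m"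
  assumes "continuous_on S A" "continuous_on S B"
  shows "continuous_on S (\<lambda>x. A x ** B x)"
  unfolding matrix_matrix_mult_def by (intro continuous_intros assms)

lemma continuous_on_matrix_inv:
  fixes N :: "'a::topological_space \<Rightarrow> real^'n^'n"
  assumes "continuous_on S N" "\<And>p. p \<in> S \<Longrightarrow> invertible (N p)"
  shows "continuous_on S (\<lambda>p. matrix_inv (N p))"
proof (rule continuous_on_eq)
  show "continuous_on S (\<lambda>p. \<chi> k l. det (\<chi> i j. if j = k then (if i = l then 1 else 0) else N p $ i $ j) / det (N p))"
  proof (intro continuous_intros)
    show "continuous_on S (\<lambda>p. if j = k then (if i = l then 1 else 0) else N p $ i $ j)" for i j k l :: 'n
      by (cases "j = k") (auto intro!: continuous_intros assms(1))
  qed (use assms invertible_det_nz in auto)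
qed (simp add: matrix_inv_cramer assms(2) vec_eq_iff)

lemma matrix_inv_entries_bounded:
  fixes N :: "'a::metric_space \<Rightarrow> real^'n^'n"
  assumes "compact S" "continuous_on S N" "\<And>p. p \<in> S \<Longrightarrow> invertible (N p)"
  obtains B where "0 \<le> B" "\<And>p k l. p \<in> S \<Longrightarrow> \<bar>matrix_inv (N p) $ k $ l\<bar> \<le> B"
proof -
  have "bounded ((\<lambda>p. matrix_inv (N p)) ` S)"
    using assms continuous_on_matrix_inv compact_continuous_image compact_imp_bounded by blast
  then obtain B where "0 < B" and B: "\<And>p. p \<in> S \<Longrightarrow> norm (matrix_inv (N p)) \<le> B"
    unfolding bounded_pos by blast
  have "\<bar>matrix_inv (N p) $ k $ l\<bar> \<le> B" if "p \<in> S" for p k l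
    using component_le_norm_cart[of "matrix_inv (N p) $ k" l]
      Finite_Cartesian_Product.norm_nth_le[of "matrix_inv (N p)" k] B[OF that]
    by simp
  then show ?thesis using that[of B] \<open>0 < B\<close> by simp
qed

lemma abs_matrix_mult_entry_le:
  fixes A :: "real^'m^'n" and B :: "real^'p^'m"
  assumes "\<And>m. \<bar>A $ k $ m\<bar> \<le> a" "\<And>m. \<bar>B $ m $ l\<bar> \<le> b"
  shows "\<bar>(A ** B) $ k $ l\<bar> \<le> real CARD('m) * (a * b)"
proof -
  have "\<bar>(A ** B) $ k $ l\<bar> \<le> (\<Sum>m\<in>UNIV. \<bar>A $ k $ m\<bar> * \<bar>B $ m $ l\<bar>)"
    unfolding matrix_matrix_mult_def abs_mult[symmetric] by (simp add: sum_abs)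
  also have "\<dots> \<le> (\<Sum>m\<in>(UNIV::'m set). a * b)"
    by (intro sum_mono mult_mono assms) (use assms(1) abs_ge_zero order_trans in blast)+
  finally show ?thesis by simp
qed

section \<open>Fundamental matrices of complex solutions\<close>

lemma vector_4 [simp]:
  "(vector [x1, x2, x3, x4] :: 'a::zero^4) $ 1 = x1"
  "(vector [x1, x2, x3, x4] :: 'a::zero^4) $ 2 = x2"
  "(vector [x1, x2, x3, x4] :: 'a::zero^4) $ 3 = x3"
  "(vector [x1, x2, x3, x4] :: 'a::zero^4) $ 4 = x4"
  unfolding vector_def by simp_all

lemma vector_4_eq_vec_lambda:
  "(vector [x1, x2, x3, x4] :: 'a::zero^4) =
     (\<chi> j. if j = 1 then x1 else if j = 2 then x2 else if j = 3 then x3 else x4)"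
  by (simp add: vec_eq_iff forall_4)

lemma continuous_on_vector_4 [continuous_intros]:
  fixes f1 f2 f3 f4 :: "'a::topological_space \<Rightarrow> 'b::{zero,topological_space}"
  assumes "continuous_on S f1" "continuous_on S f2" "continuous_on S f3" "continuous_on S f4"
  shows "continuous_on S (\<lambda>p. vector [f1 p, f2 p, f3 p, f4 p] :: 'b^4)"
  unfolding vector_4_eq_vec_lambda
proof (intro continuous_on_vec_lambda)
  show "continuous_on S (\<lambda>p. if j = 1 then f1 p else if j = 2 then f2 p else if j = 3 then f3 p else f4 p)"
    for j :: 4
    using exhaust_4[of j] assms by (elim disjE) simp_all
qed

definition re_im_matrix :: "complex^'n \<Rightarrow> complex^'n \<Rightarrow> real^'n^4" where
  "re_im_matrix v w = (\<chi> i j. if i = 1 then Re (v $ j) else if i = 2 then Im (v $ j)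
     else if i = 3 then Re (w $ j) else Im (w $ j))"

lemma colvec_eq_derivative:
  assumes "(f has_vector_derivative D) (at y)"
  shows "colvec f y = vector [Re (f y), Im (f y), Re D, Im D]"
  using DERIV_imp_deriv[OF has_field_derivative_Re[OF assms]]
    DERIV_imp_deriv[OF has_field_derivative_Im[OF assms]]
  unfolding colvec_def by simp

lemma fundmat_eq_re_im_matrix:
  assumes "(f1 has_vector_derivative D1) (at y)" "(f2 has_vector_derivative D2) (at y)"
    "(f3 has_vector_derivative D3) (at y)" "(f4 has_vector_derivative D4) (at y)"
  shows "fundmat f1 f2 f3 f4 y =
    re_im_matrix (vector [f1 y, f2 y, f3 y, f4 y]) (vector [D1, D2, D3, D4])"
  unfolding fundmat_def re_im_matrix_def
    colvec_eq_derivative[OF assms(1)] colvec_eq_derivative[OF assms(2)]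
    colvec_eq_derivative[OF assms(3)] colvec_eq_derivative[OF assms(4)]
  by (simp add: vec_eq_iff transpose_def forall_4)

lemma re_im_matrix_scaled:
  assumes "\<And>j. v' $ j = of_real (t j) * v $ j" "\<And>j. w' $ j = of_real (r * t j) * w $ j"
  shows "re_im_matrix v' w' =
    (\<chi> i j. (if i = 3 \<or> i = 4 then r else 1) * re_im_matrix v w $ i $ j * t j)"
  unfolding re_im_matrix_def by (simp add: vec_eq_iff forall_4 assms)

lemma continuous_on_re_im_matrix [continuous_intros]:
  assumes "continuous_on S v" "continuous_on S w"
  shows "continuous_on S (\<lambda>p. re_im_matrix (v p) (w p))"
  unfolding re_im_matrix_def
proof (intro continuous_on_vec_lambda)
  show "continuous_on S (\<lambda>p. if i = 1 then Re (v p $ j) else if i = 2 then Im (v p $ j)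
      else if i = 3 then Re (w p $ j) else Im (w p $ j))" for i :: 4 and j
    using exhaust_4[of i] by (elim disjE) (simp_all add: continuous_intros assms)
qed

lemma poly_of_real_has_vector_derivative [derivative_intros]:
  fixes p :: "'a::real_normed_field poly"
  shows "((\<lambda>y. poly p (of_real y)) has_vector_derivative poly (pderiv p) (of_real y)) (at y within S)"
  by (rule has_vector_derivative_real_field) (rule poly_DERIV)

lemma cis_has_vector_derivative [derivative_intros]:
  assumes "(f has_real_derivative d) (at x within S)"
  shows "((\<lambda>x. cis (f x)) has_vector_derivative \<i> * of_real d * cis (f x)) (at x within S)"
  using has_derivative_cis[OF assms[unfolded has_field_derivative_def]]
  unfolding has_vector_derivative_def by (simp add: scaleR_conv_of_real mult_ac)

section \<open>The right fundamental matrix\<close>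

definition psi :: "real \<Rightarrow> real \<Rightarrow> real" where
  "psi al y = - 4 * al + 2 * al * (1 - y) + 2 / al * (1 - y)^2"

lemma phi_has_real_derivative:
  assumes "y < 1"
  shows "((\<lambda>y. phi y al) has_real_derivative psi al y / (1 - y)^3) (at y)"
proof (cases "al = 0")
  case True
  then show ?thesis by (simp add: phi_def psi_def)
next
  case False
  obtain u where u: "y = 1 - u" "u \<noteq> 0" using assms by (intro that[of "1 - y"]) auto
  show ?thesis
    unfolding phi_def[abs_def] psi_def using assms u False
    by (auto intro!: derivative_eq_intros) (simp add: field_simps eval_nat_numeral)
qed

definition taylor_R :: "complex \<Rightarrow> complex \<Rightarrow> complex poly \<Rightarrow> real \<Rightarrow> complex" where
  "taylor_R k c p y = k + c * of_real (1 - y) + of_real ((1 - y)^2) * poly p (of_real y)"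

definition taylor_R_deriv :: "complex \<Rightarrow> complex poly \<Rightarrow> real \<Rightarrow> complex" where
  "taylor_R_deriv c p y =
     - c - 2 * of_real (1 - y) * poly p (of_real y) + of_real ((1 - y)^2) * poly (pderiv p) (of_real y)"

lemma taylor_R_has_vector_derivative [derivative_intros]:
  "(taylor_R k c p has_vector_derivative taylor_R_deriv c p y) (at y within S)"
  unfolding taylor_R_def[abs_def] taylor_R_deriv_def
  by (rule derivative_eq_intros refl)+ (simp add: algebra_simps)

text \<open>The phase \<open>cis (phi y (as + a))\<close> has no limit as \<open>y \<rightarrow> 1\<close>; replacing it by an independent
  unit \<open>z\<close> makes the rescaled matrix continuous up to \<open>y = 1\<close>.\<close>

definition fR34_lift :: "complex \<Rightarrow> complex poly \<Rightarrow> complex poly \<Rightarrow> real \<Rightarrow> complex \<Rightarrow> complex" where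
  "fR34_lift c p q y z = z * of_real (1 - y) * taylor_R 1 c p y + cnj z * of_real ((1 - y)^5) * poly q (of_real y)"

definition fR34_lift_deriv ::
    "real \<Rightarrow> complex \<Rightarrow> complex poly \<Rightarrow> complex poly \<Rightarrow> real \<Rightarrow> complex \<Rightarrow> complex" where
  "fR34_lift_deriv al c p q y z =
     z * (\<i> * of_real (psi al y) * taylor_R 1 c p y
          + of_real ((1 - y)^2) * (of_real (1 - y) * taylor_R_deriv c p y - taylor_R 1 c p y))
   + cnj z * of_real ((1 - y)^4) * ((- \<i> * of_real (psi al y) - 5 * of_real ((1 - y)^2)) * poly q (of_real y)
          + of_real ((1 - y)^3) * poly (pderiv q) (of_real y))"

lemma fR34_eq_lift:
  "fR34 as p q a y = fR34_lift ((2 * of_real (as + a) - \<i>) / (2 * of_real (as + a))) p q y (cis (phi y (as + a)))"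
  unfolding fR34_def fR34_lift_def taylor_R_def Let_def by (simp add: cis_cnj)

lemma fR34_has_vector_derivative:
  fixes as a y :: real
  defines "c \<equiv> (2 * of_real (as + a) - \<i>) / (2 * of_real (as + a))"
  assumes "y < 1"
  shows "(fR34 as p q a has_vector_derivative
    fR34_lift_deriv (as + a) c p q y (cis (phi y (as + a))) / of_real ((1 - y)^2)) (at y)"
proof -
  let ?phi = "\<lambda>y. phi y (as + a)"
  have eq: "fR34 as p q a = (\<lambda>y. cis (?phi y) * (of_real (1 - y) * taylor_R 1 c p y)
      + cis (- ?phi y) * (of_real ((1 - y)^5) * poly q (of_real y)))"
    unfolding fR34_eq_lift fR34_lift_def c_def by (simp add: cis_cnj mult_ac fun_eq_iff)
  have "y \<noteq> 1" using assms by simp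
  show ?thesis
    unfolding eq fR34_lift_deriv_def
    apply (rule derivative_eq_intros refl phi_has_real_derivative[OF assms(2)])+
    apply (simp add: field_simps cis_cnj \<open>y \<noteq> 1\<close>)
    apply algebra
    done
qed

lemma fR1_eq_taylor_R:
  "fR1 as P a = taylor_R 1 ((of_real (as + a) + \<i>) / (2 * of_real (as + a))) (P 1)"
  unfolding fR1_def taylor_R_def Let_def by (simp add: fun_eq_iff)

lemma fR2_eq_taylor_R:
  "fR2 as P a = taylor_R \<i> (\<i> * (of_real (as + a) + \<i>) / (2 * of_real (as + a))) (P 2)"
  unfolding fR2_def taylor_R_def Let_def by (simp add: fun_eq_iff)

definition FR_rescaled :: "real \<Rightarrow> (nat \<Rightarrow> complex poly) \<Rightarrow> real \<Rightarrow> real \<Rightarrow> complex \<Rightarrow> real^4^4" where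
  "FR_rescaled as P y a z =
    (let al = complex_of_real (as + a); c1 = (al + \<i>) / (2 * al); c2 = \<i> * (al + \<i>) / (2 * al);
         c = (2 * al - \<i>) / (2 * al); w = complex_of_real ((1 - y)^2) in
     re_im_matrix
       (vector [taylor_R 1 c1 (P 1) y, taylor_R \<i> c2 (P 2) y, fR34_lift c (P 3) (P 4) y z, \<i> * fR34_lift c (P 5) (P 6) y z])
       (vector [w * taylor_R_deriv c1 (P 1) y, w * taylor_R_deriv c2 (P 2) y,
                fR34_lift_deriv (as + a) c (P 3) (P 4) y z,
                \<i> * fR34_lift_deriv (as + a) c (P 5) (P 6) y z]))"

lemma FR_eq_rescaled:
  assumes "y < 1"
  shows "FR as P y a =
    (\<chi> i j. (if i = 3 \<or> i = 4 then 1 / (1 - y)^2 else 1) * FR_rescaled as P y a (cis (phi y (as + a))) $ i $ j)"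
proof -
  let ?al = "complex_of_real (as + a)"
  let ?c1 = "(?al + \<i>) / (2 * ?al)" and ?c2 = "\<i> * (?al + \<i>) / (2 * ?al)" and ?c = "(2 * ?al - \<i>) / (2 * ?al)"
  let ?D3 = "\<lambda>p q. fR34_lift_deriv (as + a) ?c p q y (cis (phi y (as + a))) / of_real ((1 - y)^2)"
  have "FR as P y a = re_im_matrix (vector [fR1 as P a y, fR2 as P a y, fR3 as P a y, fR4 as P a y])
      (vector [taylor_R_deriv ?c1 (P 1) y, taylor_R_deriv ?c2 (P 2) y, ?D3 (P 3) (P 4), \<i> * ?D3 (P 5) (P 6)])"
    unfolding FR_def fR1_eq_taylor_R fR2_eq_taylor_R fR3_def[abs_def] fR4_def[abs_def]
    by (intro fundmat_eq_re_im_matrix derivative_intros fR34_has_vector_derivative assms)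
  also have "\<dots> = (\<chi> i j. (if i = 3 \<or> i = 4 then 1 / (1 - y)^2 else 1)
      * FR_rescaled as P y a (cis (phi y (as + a))) $ i $ j * 1)"
    unfolding FR_rescaled_def Let_def
  proof (rule re_im_matrix_scaled)
    show "vector [fR1 as P a y, fR2 as P a y, fR3 as P a y, fR4 as P a y] $ j = of_real 1 *
      vector [taylor_R 1 ?c1 (P 1) y, taylor_R \<i> ?c2 (P 2) y, fR34_lift ?c (P 3) (P 4) y (cis (phi y (as + a))),
        \<i> * fR34_lift ?c (P 5) (P 6) y (cis (phi y (as + a)))] $ j" for j :: 4
      using exhaust_4[of j]
      by (elim disjE) (simp_all add: fR1_eq_taylor_R fR2_eq_taylor_R fR3_def fR4_def fR34_eq_lift)
    show "vector [taylor_R_deriv ?c1 (P 1) y, taylor_R_deriv ?c2 (P 2) y, ?D3 (P 3) (P 4), \<i> * ?D3 (P 5) (P 6)] $ j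
      = of_real (1 / (1 - y)^2 * 1) * vector [of_real ((1 - y)^2) * taylor_R_deriv ?c1 (P 1) y,
        of_real ((1 - y)^2) * taylor_R_deriv ?c2 (P 2) y,
        fR34_lift_deriv (as + a) ?c (P 3) (P 4) y (cis (phi y (as + a))),
        \<i> * fR34_lift_deriv (as + a) ?c (P 5) (P 6) y (cis (phi y (as + a)))] $ j" for j :: 4
      using exhaust_4[of j] assms by (elim disjE) (simp_all add: field_simps)
  qed
  finally show ?thesis by simp
qed

lemma continuous_on_taylor_R [continuous_intros]:
  assumes "continuous_on S C" "continuous_on S Y"
  shows "continuous_on S (\<lambda>x. taylor_R k (C x) p (Y x))"
  unfolding taylor_R_def by (intro continuous_intros assms)

lemma continuous_on_taylor_R_deriv [continuous_intros]:
  assumes "continuous_on S C" "continuous_on S Y"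
  shows "continuous_on S (\<lambda>x. taylor_R_deriv (C x) p (Y x))"
  unfolding taylor_R_deriv_def by (intro continuous_intros assms)

lemma continuous_on_fR34_lift [continuous_intros]:
  assumes "continuous_on S C" "continuous_on S Y" "continuous_on S Z"
  shows "continuous_on S (\<lambda>x. fR34_lift (C x) p q (Y x) (Z x))"
  unfolding fR34_lift_def by (intro continuous_intros assms)

lemma continuous_on_fR34_lift_deriv [continuous_intros]:
  assumes "continuous_on S A" "continuous_on S C" "continuous_on S Y" "continuous_on S Z"
    "\<forall>x\<in>S. A x \<noteq> 0"
  shows "continuous_on S (\<lambda>x. fR34_lift_deriv (A x) (C x) p q (Y x) (Z x))"
  unfolding fR34_lift_deriv_def psi_def by (intro continuous_intros assms)

lemma continuous_on_FR_rescaled [continuous_intros]: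
  assumes "continuous_on S Y" "continuous_on S A" "continuous_on S Z" "\<forall>x\<in>S. as + A x \<noteq> 0"
  shows "continuous_on S (\<lambda>x. FR_rescaled as P (Y x) (A x) (Z x))"
proof -
  have "\<forall>x\<in>S. 2 * complex_of_real (as + A x) \<noteq> 0"
    using assms(4) by (simp del: of_real_add)
  then show ?thesis
    unfolding FR_rescaled_def Let_def by (intro continuous_intros assms)
qed

lemma invertible_FR_rescaled_at_1:
  assumes "as + a \<noteq> 0" "cmod z = 1"
  shows "invertible (FR_rescaled as P 1 a z)"
proof -
  define b where "b = as + a"
  let ?x = "Re z" and ?w = "Im z"
  have b: "b \<noteq> 0" using assms(1) b_def by simp
  have xw: "?w * ?w + ?x * ?x = 1"
    using assms(2) by (metis cmod_power2 power_one power2_eq_square add.commute)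
  have N: "FR_rescaled as P 1 a z = (\<chi> i j. if i = 1 \<and> j = 1 then 1 else if i = 2 \<and> j = 2 then 1
      else if i = 3 \<and> j = 3 then 4 * b * ?w else if i = 3 \<and> j = 4 then 4 * b * ?x
      else if i = 4 \<and> j = 3 then - 4 * b * ?x else if i = 4 \<and> j = 4 then 4 * b * ?w else 0)"
    unfolding FR_rescaled_def Let_def re_im_matrix_def fR34_lift_def fR34_lift_deriv_def
      taylor_R_def taylor_R_deriv_def psi_def b_def
    by (simp add: vec_eq_iff forall_4 algebra_simps)
  have "FR_rescaled as P 1 a z ** (\<chi> i j. if i = 1 \<and> j = 1 then 1 else if i = 2 \<and> j = 2 then 1
      else if i = 3 \<and> j = 3 then ?w / (4 * b) else if i = 3 \<and> j = 4 then - ?x / (4 * b)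
      else if i = 4 \<and> j = 3 then ?x / (4 * b) else if i = 4 \<and> j = 4 then ?w / (4 * b) else 0) = mat 1"
    unfolding N using b xw
    by (simp add: vec_eq_iff forall_4 matrix_matrix_mult_def sum_4 mat_def field_simps) algebra
  then show ?thesis using invertible_right_inverse by blast
qed

text \<open>The zeros of \<open>phase_gap as\<close> in \<open>[0, 1] \<times> J \<times> S\<^sup>1\<close> form the closure of the graph of
  \<open>z = cis (phi y (as + a))\<close>, i.e. the graph plus the fibre \<open>y = 1\<close>, on which \<open>FR_rescaled\<close>
  is invertible as well.\<close>

definition phase_gap :: "real \<Rightarrow> real \<times> real \<times> complex \<Rightarrow> real" where
  "phase_gap as p = (1 - fst p) * cmod (snd (snd p) - cis (phi (fst p) (as + fst (snd p))))"

lemma abs_phase_gap_le: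
  assumes "cmod (snd (snd p)) = 1"
  shows "\<bar>phase_gap as p\<bar> \<le> 2 * \<bar>1 - fst p\<bar>"
proof -
  have "cmod (snd (snd p) - cis (phi (fst p) (as + fst (snd p)))) \<le> 2"
    using assms norm_triangle_ineq4[of "snd (snd p)" "cis (phi (fst p) (as + fst (snd p)))"] by simp
  then have "\<bar>1 - fst p\<bar> * cmod (snd (snd p) - cis (phi (fst p) (as + fst (snd p)))) \<le> \<bar>1 - fst p\<bar> * 2"
    by (rule mult_left_mono) simp
  then show ?thesis by (simp add: phase_gap_def abs_mult mult.commute)
qed

lemma continuous_on_phase_gap:
  assumes "\<forall>a\<in>J. as + a \<noteq> 0"
  shows "continuous_on ({0..1} \<times> J \<times> sphere 0 1) (phase_gap as)"
  unfolding continuous_on_eq_continuous_within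
proof
  let ?T = "{0..1::real} \<times> J \<times> sphere (0::complex) 1"
  fix p assume p: "p \<in> ?T"
  show "continuous (at p within ?T) (phase_gap as)"
  proof (cases "fst p < 1")
    case True
    let ?U = "{q :: real \<times> real \<times> complex. fst q < 1 \<and> as + fst (snd q) \<noteq> 0}"
    have "open ?U"
      by (intro open_Collect_conj open_Collect_less open_Collect_neq continuous_intros)
    moreover have "continuous_on ?U (phase_gap as)"
      unfolding phase_gap_def phi_def by (intro continuous_intros) auto
    moreover have "p \<in> ?U" using True p assms by auto
    ultimately show ?thesis
      using continuous_on_eq_continuous_at continuous_at_imp_continuous_within by blast
  next
    case False
    then have "fst p = 1" using p by auto
    have "\<bar>phase_gap as q\<bar> \<le> 2 * \<bar>1 - fst q\<bar>" if "q \<in> ?T" for q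
      using that by (intro abs_phase_gap_le) auto
    then have "eventually (\<lambda>q. norm (phase_gap as q) \<le> 2 * \<bar>1 - fst q\<bar>) (at p within ?T)"
      by (auto simp: eventually_at_filter)
    moreover have "((\<lambda>q. 2 * \<bar>1 - fst q\<bar>) \<longlongrightarrow> 0) (at p within ?T)"
      using \<open>fst p = 1\<close> by (auto intro!: tendsto_eq_intros)
    ultimately have "(phase_gap as \<longlongrightarrow> 0) (at p within ?T)"
      by (rule Lim_null_comparison)
    then show ?thesis
      using \<open>fst p = 1\<close> by (simp add: continuous_within phase_gap_def)
  qed
qed

lemma compact_phase_gap_zeros:
  assumes "compact J" "\<forall>a\<in>J. as + a \<noteq> 0"
  shows "compact {p \<in> {0..1} \<times> J \<times> sphere 0 1. phase_gap as p = 0}"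
proof -
  let ?T = "{0..1::real} \<times> J \<times> sphere (0::complex) 1"
  have "compact ?T"
    by (intro compact_Times compact_sphere assms(1) compact_Icc)
  moreover have "closed {p \<in> ?T. phase_gap as p = 0}"
    using \<open>compact ?T\<close> continuous_on_phase_gap[OF assms(2)]
    by (intro continuous_closed_preimage_constant compact_imp_closed)
  ultimately have "compact (?T \<inter> {p \<in> ?T. phase_gap as p = 0})"
    by (rule compact_Int_closed)
  then show ?thesis by (simp add: Int_absorb1 subset_iff)
qed

lemma FR_inv_entries_bound:
  assumes "compact J" "\<forall>a\<in>J. as + a \<noteq> 0"
    and "\<And>y a. y \<in> {0..<1} \<Longrightarrow> a \<in> J \<Longrightarrow> invertible (FR as P y a)"
  obtains B where "0 \<le> B" "\<And>y a k l. y \<in> {0..<1} \<Longrightarrow> a \<in> J \<Longrightarrow> l = 3 \<or> l = 4 \<Longrightarrow>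
    \<bar>matrix_inv (FR as P y a) $ k $ l\<bar> \<le> B * (1 - y)^2"
proof -
  let ?S = "{p \<in> {0..1} \<times> J \<times> sphere 0 1. phase_gap as p = 0}"
  let ?N = "\<lambda>p. FR_rescaled as P (fst p) (fst (snd p)) (snd (snd p))"
  let ?s = "\<lambda>y i. if i = 3 \<or> i = 4 then 1 / (1 - y)^2 else (1::real)"
  have FR: "FR as P y a = (\<chi> i j. ?s y i * ?N (y, a, cis (phi y (as + a))) $ i $ j)" if "y < 1" for y a
    using FR_eq_rescaled[OF that] by simp
  have inv: "invertible (?N p)" if "p \<in> ?S" for p
  proof -
    obtain y a z where p: "p = (y, a, z)" by (metis prod.exhaust)
    show ?thesis
    proof (cases "y = 1")
      case True
      then show ?thesis using invertible_FR_rescaled_at_1 assms(2) that p by auto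
    next
      case False
      then have y: "0 \<le> y" "y < 1" and a: "a \<in> J" and z: "z = cis (phi y (as + a))"
        using that p by (auto simp: phase_gap_def)
      have N: "?N p = (\<chi> i j. (1 / ?s y i) * FR as P y a $ i $ j)"
        unfolding FR[OF y(2)] p z using y by (simp add: vec_eq_iff)
      have "invertible (FR as P y a)" using assms(3) y a by simp
      then have "invertible (\<chi> i j. (1 / ?s y i) * FR as P y a $ i $ j)"
        by (rule invertible_row_scaled) (use y in simp)
      then show ?thesis unfolding N .
    qed
  qed
  have "continuous_on ?S ?N" using assms(2) by (intro continuous_intros) auto
  then obtain B where "0 \<le> B" and B: "\<And>p k l. p \<in> ?S \<Longrightarrow> \<bar>matrix_inv (?N p) $ k $ l\<bar> \<le> B"
    using matrix_inv_entries_bounded[of ?S ?N] compact_phase_gap_zeros[OF assms(1,2)] inv by blast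
  have "\<bar>matrix_inv (FR as P y a) $ k $ l\<bar> \<le> B * (1 - y)^2"
    if y: "y \<in> {0..<1}" and a: "a \<in> J" and l: "l = 3 \<or> l = 4" for y a k l
  proof -
    let ?p = "(y, a, cis (phi y (as + a)))"
    have "?p \<in> ?S" using y a by (simp add: phase_gap_def)
    have "?s y i \<noteq> 0" for i using y by simp
    then have "matrix_inv (FR as P y a) $ k $ l = matrix_inv (?N ?p) $ k $ l * (1 - y)^2"
      using FR[of y a] matrix_inv_row_scaled[OF inv[OF \<open>?p \<in> ?S\<close>]] y l by auto
    then show ?thesis using B[OF \<open>?p \<in> ?S\<close>] by (auto simp: abs_mult intro!: mult_right_mono)
  qed
  with \<open>0 \<le> B\<close> show ?thesis using that by blast
qed

section \<open>The left fundamental matrix\<close>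

definition taylor_L :: "complex \<Rightarrow> complex poly \<Rightarrow> real \<Rightarrow> complex" where
  "taylor_L k q y = k + of_real (1 + y) * poly q (of_real y)"

definition taylor_L_deriv :: "complex poly \<Rightarrow> real \<Rightarrow> complex" where
  "taylor_L_deriv q y = poly q (of_real y) + of_real (1 + y) * poly (pderiv q) (of_real y)"

lemma taylor_L_has_vector_derivative [derivative_intros]:
  "(taylor_L k q has_vector_derivative taylor_L_deriv q y) (at y within S)"
  unfolding taylor_L_def[abs_def] taylor_L_deriv_def
  by (rule derivative_eq_intros refl)+ simp

lemma taylor_L_quotient_has_vector_derivative:
  assumes "-1 < y"
  shows "((\<lambda>y. taylor_L k q y / of_real (1 + y)) has_vector_derivative
    (of_real (1 + y) * taylor_L_deriv q y - taylor_L k q y) / of_real ((1 + y)^2)) (at y)"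
proof -
  have "1 + y \<noteq> 0" using assms by simp
  then have v: "complex_of_real (1 + y) \<noteq> 0" using of_real_eq_0_iff by blast
  have "((\<lambda>y. inverse (1 + y)) has_real_derivative - 1 / (1 + y)^2) (at y)"
    using \<open>1 + y \<noteq> 0\<close> by (auto intro!: derivative_eq_intros simp: field_simps power2_eq_square)
  note D = has_vector_derivative_mult[OF taylor_L_has_vector_derivative has_vector_derivative_of_real[OF this]]
  have "taylor_L k q y * of_real (- 1 / (1 + y)^2) + taylor_L_deriv q y * of_real (inverse (1 + y))
      = (of_real (1 + y) * taylor_L_deriv q y - taylor_L k q y) / of_real ((1 + y)^2)"
    unfolding of_real_minus of_real_divide of_real_power of_real_1 of_real_inverse
    using v by (simp add: field_simps power2_eq_square del: of_real_add)
  then have "((\<lambda>y. taylor_L k q y * of_real (inverse (1 + y))) has_vector_derivative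
    (of_real (1 + y) * taylor_L_deriv q y - taylor_L k q y) / of_real ((1 + y)^2)) (at y)"
    by (rule has_vector_derivative_eq_rhs[OF D])
  then show ?thesis by (simp add: divide_inverse of_real_inverse)
qed

definition FL_rescaled :: "(nat \<Rightarrow> complex poly) \<Rightarrow> real \<Rightarrow> real^4^4" where
  "FL_rescaled Q y = (let v = complex_of_real (1 + y) in
     re_im_matrix
       (vector [taylor_L 1 (Q 1) y, taylor_L \<i> (Q 2) y, taylor_L 1 (Q 3) y, \<i> * taylor_L 1 (Q 4) y])
       (vector [v * taylor_L_deriv (Q 1) y, v * taylor_L_deriv (Q 2) y,
                v * taylor_L_deriv (Q 3) y - taylor_L 1 (Q 3) y,
                \<i> * (v * taylor_L_deriv (Q 4) y - taylor_L 1 (Q 4) y)]))"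

lemma FL_eq_rescaled:
  assumes "-1 < y"
  defines "s \<equiv> \<lambda>i::4. if i = 3 \<or> i = 4 then 1 / (1 + y) else 1"
  shows "FL Q y = (\<chi> i j. s i * FL_rescaled Q y $ i $ j * s j)"
proof -
  let ?T = "\<lambda>n. taylor_L 1 (Q n) y" and ?T' = "\<lambda>n. taylor_L_deriv (Q n) y"
  let ?v = "complex_of_real (1 + y)"
  have "y \<noteq> -1" using assms by simp
  have "1 + complex_of_real y \<noteq> 0"
    using of_real_eq_0_iff[of "1 + y", where 'a=complex] \<open>y \<noteq> -1\<close> by simp
  have g: "gL1 Q = taylor_L 1 (Q 1)" "gL2 Q = taylor_L \<i> (Q 2)"
    "gL3 Q = (\<lambda>y. taylor_L 1 (Q 3) y / of_real (1 + y))"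
    "gL4 Q = (\<lambda>y. \<i> * (taylor_L 1 (Q 4) y / of_real (1 + y)))"
    unfolding gL1_def gL2_def gL3_def gL4_def taylor_L_def by (simp_all add: fun_eq_iff)
  have "FL Q y = re_im_matrix (vector [gL1 Q y, gL2 Q y, gL3 Q y, gL4 Q y])
      (vector [?T' 1, taylor_L_deriv (Q 2) y, (?v * ?T' 3 - ?T 3) / of_real ((1 + y)^2),
        \<i> * ((?v * ?T' 4 - ?T 4) / of_real ((1 + y)^2))])"
    unfolding FL_def g
    by (intro fundmat_eq_re_im_matrix derivative_intros taylor_L_quotient_has_vector_derivative assms)
  also have "\<dots> = (\<chi> i j. (if i = 3 \<or> i = 4 then 1 / (1 + y) else 1) * FL_rescaled Q y $ i $ j * s j)"
    unfolding FL_rescaled_def Let_def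
  proof (rule re_im_matrix_scaled)
    show "vector [gL1 Q y, gL2 Q y, gL3 Q y, gL4 Q y] $ j = of_real (s j) *
      vector [?T 1, taylor_L \<i> (Q 2) y, ?T 3, \<i> * ?T 4] $ j" for j :: 4
      using exhaust_4[of j] by (elim disjE) (simp_all add: g s_def of_real_divide)
    show "vector [?T' 1, taylor_L_deriv (Q 2) y, (?v * ?T' 3 - ?T 3) / of_real ((1 + y)^2),
        \<i> * ((?v * ?T' 4 - ?T 4) / of_real ((1 + y)^2))] $ j =
      of_real (1 / (1 + y) * s j) * vector [?v * ?T' 1, ?v * taylor_L_deriv (Q 2) y,
        ?v * ?T' 3 - ?T 3, \<i> * (?v * ?T' 4 - ?T 4)] $ j" for j :: 4
      using exhaust_4[of j] \<open>y \<noteq> -1\<close> \<open>1 + complex_of_real y \<noteq> 0\<close>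
      by (elim disjE) (simp_all add: s_def field_simps power2_eq_square)
  qed
  finally show ?thesis by (simp add: s_def)
qed

lemma continuous_on_FL_rescaled: "continuous_on S (FL_rescaled Q)"
  unfolding FL_rescaled_def Let_def taylor_L_def taylor_L_deriv_def by (intro continuous_intros)

lemma invertible_FL_rescaled_at_minus_1: "invertible (FL_rescaled Q (-1))"
proof -
  have "FL_rescaled Q (-1) ** FL_rescaled Q (-1) = mat 1"
    unfolding FL_rescaled_def Let_def re_im_matrix_def taylor_L_def taylor_L_deriv_def
    by (simp add: vec_eq_iff forall_4 matrix_matrix_mult_def sum_4 mat_def)
  then show ?thesis using invertible_right_inverse by blast
qed

lemma FL_inv_entries_bound:
  assumes "\<And>y. y \<in> {-1<..0} \<Longrightarrow> invertible (FL Q y)"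
  obtains B where "0 \<le> B" "\<And>y k l. y \<in> {-1<..0} \<Longrightarrow> l = 3 \<or> l = 4 \<Longrightarrow>
    \<bar>matrix_inv (FL Q y) $ k $ l\<bar> \<le> B * (1 + y)"
proof -
  let ?s = "\<lambda>y i::4. if i = 3 \<or> i = 4 then 1 / (1 + y) else (1::real)"
  have inv: "invertible (FL_rescaled Q y)" if "y \<in> {-1..0}" for y
  proof (cases "y = -1")
    case True
    then show ?thesis using invertible_FL_rescaled_at_minus_1 by simp
  next
    case False
    then have y: "-1 < y" "y \<le> 0" using that by auto
    have "FL_rescaled Q y = (\<chi> i j. (1 / ?s y i) * FL Q y $ i $ j * (1 / ?s y j))"
      unfolding FL_eq_rescaled[OF y(1)] using y by (simp add: vec_eq_iff)
    moreover have "invertible (\<chi> i j. (1 / ?s y i) * FL Q y $ i $ j * (1 / ?s y j))"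
      using y assms by (intro invertible_scaled) auto
    ultimately show ?thesis by simp
  qed
  obtain B where "0 \<le> B" and B: "\<And>y k l. y \<in> {-1..0} \<Longrightarrow> \<bar>matrix_inv (FL_rescaled Q y) $ k $ l\<bar> \<le> B"
    using matrix_inv_entries_bounded[of "{-1..0}" "FL_rescaled Q"] continuous_on_FL_rescaled inv by blast
  have "\<bar>matrix_inv (FL Q y) $ k $ l\<bar> \<le> B * (1 + y)"
    if y: "y \<in> {-1<..0}" and l: "l = 3 \<or> l = 4" for y k l
  proof -
    have s: "?s y i \<noteq> 0" for i using y by simp
    have "matrix_inv (FL Q y) $ k $ l = matrix_inv (FL_rescaled Q y) $ k $ l * (1 + y) * (1 / ?s y k)"
      using matrix_inv_scaled[OF inv s s] FL_eq_rescaled[of y Q] y l by auto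
    also have "\<bar>\<dots>\<bar> = \<bar>matrix_inv (FL_rescaled Q y) $ k $ l\<bar> * (1 + y) * (1 / ?s y k)"
      using y by (simp add: abs_mult)
    also have "\<dots> \<le> B * (1 + y) * 1"
      using B[of y k l] y by (intro mult_mono) auto
    finally show ?thesis by simp
  qed
  with \<open>0 \<le> B\<close> show ?thesis using that by blast
qed

section \<open>The glued fundamental matrix\<close>

lemma FR_at_0: "FR as P 0 a = FR_rescaled as P 0 a 1"
  using FR_eq_rescaled[of 0 as P a] by (simp add: phi_def vec_eq_iff)

lemma invertible_MF:
  assumes "invertible (FL Q 0)" "invertible (FR as P 0 a)"
  shows "invertible (MF as P Q a)"
  unfolding MF_def using invertible_mult[OF invertible_matrix_inv[OF assms(1)] assms(2)] .

lemma MF_inv_entries_bound: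
  assumes "compact J" "\<forall>a\<in>J. as + a \<noteq> 0" "invertible (FL Q 0)"
    and "\<And>a. a \<in> J \<Longrightarrow> invertible (FR as P 0 a)"
  obtains B where "0 \<le> B" "\<And>a k l. a \<in> J \<Longrightarrow> \<bar>matrix_inv (MF as P Q a) $ k $ l\<bar> \<le> B"
proof -
  have "continuous_on J (\<lambda>a. matrix_inv (FL Q 0) ** FR_rescaled as P 0 a 1)"
    using assms(2) by (intro continuous_intros) auto
  then have "continuous_on J (MF as P Q)"
    by (rule continuous_on_eq) (simp add: MF_def FR_at_0)
  then show ?thesis
    using matrix_inv_entries_bounded[of J "MF as P Q"] assms(1) invertible_MF[OF assms(3,4)] that
    by blast
qed

lemma Ffund_inv_entries_bound:
  assumes "admissible as J P Q"
  obtains K where "\<And>a y k l. a \<in> J \<Longrightarrow> y \<in> {-1<..<1} \<Longrightarrow> l = 3 \<or> l = 4 \<Longrightarrow>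
    \<bar>matrix_inv (Ffund as P Q y a) $ k $ l\<bar> \<le> K * ((1 + y) * (1 - y)^2)"
proof -
  have J: "compact J" and nz: "\<forall>a\<in>J. as + a \<noteq> 0"
    and R: "\<And>y a. y \<in> {0..<1} \<Longrightarrow> a \<in> J \<Longrightarrow> invertible (FR as P y a)"
    and L: "\<And>y. y \<in> {-1<..0} \<Longrightarrow> invertible (FL Q y)"
    using assms unfolding admissible_def invertible_det_nz
    by (auto simp: add_eq_0_iff2 minus_equation_iff)
  obtain BR where "0 \<le> BR" and BR: "\<And>y a k l. y \<in> {0..<1} \<Longrightarrow> a \<in> J \<Longrightarrow> l = 3 \<or> l = 4 \<Longrightarrow>
      \<bar>matrix_inv (FR as P y a) $ k $ l\<bar> \<le> BR * (1 - y)^2"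
    using FR_inv_entries_bound[OF J nz R] by blast
  obtain BL where "0 \<le> BL" and BL: "\<And>y k l. y \<in> {-1<..0} \<Longrightarrow> l = 3 \<or> l = 4 \<Longrightarrow>
      \<bar>matrix_inv (FL Q y) $ k $ l\<bar> \<le> BL * (1 + y)"
    using FL_inv_entries_bound[OF L] by blast
  obtain BM where "0 \<le> BM" and BM: "\<And>a k l. a \<in> J \<Longrightarrow> \<bar>matrix_inv (MF as P Q a) $ k $ l\<bar> \<le> BM"
    using MF_inv_entries_bound[OF J nz L R] by auto
  have "\<bar>matrix_inv (Ffund as P Q y a) $ k $ l\<bar> \<le> (BR + 4 * BM * BL) * ((1 + y) * (1 - y)^2)"
    if a: "a \<in> J" and y: "y \<in> {-1<..<1}" and l: "l = 3 \<or> l = 4" for a y k l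
  proof (cases "y \<le> 0")
    case True
    have inv: "matrix_inv (Ffund as P Q y a) = matrix_inv (MF as P Q a) ** matrix_inv (FL Q y)"
      using True y a L R by (simp add: Ffund_def matrix_inv_mult invertible_MF)
    have "\<bar>matrix_inv (Ffund as P Q y a) $ k $ l\<bar> \<le> real CARD(4) * (BM * (BL * (1 + y)))"
      unfolding inv by (rule abs_matrix_mult_entry_le) (use BM[OF a] BL[of y l] l y True in auto)
    also have "\<dots> = (4 * BM * BL) * ((1 + y) * 1)" by simp
    also have "\<dots> \<le> (BR + 4 * BM * BL) * ((1 + y) * (1 - y)^2)"
      using True y \<open>0 \<le> BR\<close> \<open>0 \<le> BM\<close> \<open>0 \<le> BL\<close>
      by (intro mult_mono mult_left_mono one_le_power) auto
    finally show ?thesis .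
  next
    case False
    then have "\<bar>matrix_inv (Ffund as P Q y a) $ k $ l\<bar> \<le> BR * (1 - y)^2"
      using BR a y l by (simp add: Ffund_def)
    also have "\<dots> = BR * (1 * (1 - y)^2)" by simp
    also have "\<dots> \<le> (BR + 4 * BM * BL) * ((1 + y) * (1 - y)^2)"
      using False \<open>0 \<le> BR\<close> \<open>0 \<le> BM\<close> \<open>0 \<le> BL\<close>
      by (intro mult_mono mult_right_mono) auto
    finally show ?thesis .
  qed
  then show ?thesis using that by blast
qed

lemma weighted_le_normY:
  assumes "g \<in> Yspace" "y \<in> {-1<..<1}"
  shows "(1 + y) * (1 - y)^2 * cmod (g y) \<le> normY g"
proof -
  obtain h where h: "continuous_on {-1..1} h"
    and gh: "\<And>y. y \<in> {-1<..<1} \<Longrightarrow> h y = of_real ((1 + y) * (1 - y)^2) * g y"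
    using assms(1) unfolding Yspace_def by blast
  obtain M where M: "\<And>y. y \<in> {-1..1} \<Longrightarrow> cmod (h y) \<le> M"
    using compact_imp_bounded[OF compact_continuous_image[OF h compact_Icc]]
    unfolding bounded_iff by blast
  have "(1 + y) * (1 - y)^2 * cmod (g y) \<le> M" if "y \<in> {-1<..<1}" for y
  proof -
    have "(1 + y) * (1 - y)^2 * cmod (g y) = cmod (h y)"
      using that gh[OF that] by (simp only: norm_mult norm_of_real) (simp add: abs_mult)
    also have "\<dots> \<le> M" using M that by simp
    finally show ?thesis .
  qed
  then have "bdd_above ((\<lambda>y. (1 + y) * (1 - y)^2 * cmod (g y)) ` {-1<..<1})"
    by (intro bdd_aboveI[of _ M]) blast
  then show ?thesis
    unfolding normY_def using assms(2) by (rule cSUP_upper2) simp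
qed

lemma normY_nonneg: "g \<in> Yspace \<Longrightarrow> 0 \<le> normY g"
  using weighted_le_normY[of g 0] by (simp add: order_trans[OF norm_ge_zero])

lemma abs_alphaF_le:
  "\<bar>alphaF as P Q k a g y\<bar> \<le>
    (\<bar>matrix_inv (Ffund as P Q y a) $ k $ 3\<bar> + \<bar>matrix_inv (Ffund as P Q y a) $ k $ 4\<bar>) * cmod (g y)"
proof -
  have "\<bar>alphaF as P Q k a g y\<bar> \<le> \<bar>matrix_inv (Ffund as P Q y a) $ k $ 3\<bar> * \<bar>Re (g y)\<bar>
      + \<bar>matrix_inv (Ffund as P Q y a) $ k $ 4\<bar> * \<bar>Im (g y)\<bar>"
    unfolding alphaF_def abs_mult[symmetric] by (rule abs_triangle_ineq)
  also have "\<dots> \<le> \<bar>matrix_inv (Ffund as P Q y a) $ k $ 3\<bar> * cmod (g y)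
      + \<bar>matrix_inv (Ffund as P Q y a) $ k $ 4\<bar> * cmod (g y)"
    by (intro add_mono mult_left_mono abs_Re_le_cmod abs_Im_le_cmod abs_ge_zero)
  finally show ?thesis by (simp add: distrib_right)
qed

lemma abs_alphaF_le_normY:
  assumes "g \<in> Yspace" "y \<in> {-1<..<1}"
    and "\<And>l. l = 3 \<or> l = 4 \<Longrightarrow> \<bar>matrix_inv (Ffund as P Q y a) $ k $ l\<bar> \<le> K * ((1 + y) * (1 - y)^2)"
  shows "\<bar>alphaF as P Q k a g y\<bar> \<le> 2 * \<bar>K\<bar> * normY g"
proof -
  have "\<bar>alphaF as P Q k a g y\<bar> \<le> (K * ((1 + y) * (1 - y)^2) + K * ((1 + y) * (1 - y)^2)) * cmod (g y)"
    using assms(3) by (intro order_trans[OF abs_alphaF_le] mult_right_mono add_mono) auto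
  also have "\<dots> = 2 * K * ((1 + y) * (1 - y)^2 * cmod (g y))"
    by (simp add: algebra_simps)
  also have "\<dots> \<le> 2 * \<bar>K\<bar> * ((1 + y) * (1 - y)^2 * cmod (g y))"
    using assms(2) by (intro mult_right_mono) auto
  also have "\<dots> \<le> 2 * \<bar>K\<bar> * normY g"
    using weighted_le_normY[OF assms(1,2)] by (intro mult_left_mono) auto
  finally show ?thesis .
qed

theorem lemma3p24:
  fixes as :: real and J :: "real set" and P Q :: "nat \<Rightarrow> complex poly"
  assumes "admissible as J P Q"
  shows "\<exists>C > 0. \<forall>a \<in> J. \<forall>g \<in> Yspace. \<forall>k :: 4.
           (\<forall>y \<in> {-1<..<1}. \<bar>alphaF as P Q k a g y\<bar> \<le> C * normY g)"
proof -
  obtain K where K: "\<And>a y k l. a \<in> J \<Longrightarrow> y \<in> {-1<..<1} \<Longrightarrow> l = 3 \<or> l = 4 \<Longrightarrow>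
      \<bar>matrix_inv (Ffund as P Q y a) $ k $ l\<bar> \<le> K * ((1 + y) * (1 - y)^2)"
    using Ffund_inv_entries_bound[OF assms] by blast
  have "\<bar>alphaF as P Q k a g y\<bar> \<le> (2 * \<bar>K\<bar> + 1) * normY g"
    if "a \<in> J" "g \<in> Yspace" "y \<in> {-1<..<1}" for a g k y
  proof -
    have "\<bar>alphaF as P Q k a g y\<bar> \<le> 2 * \<bar>K\<bar> * normY g"
      using that K by (intro abs_alphaF_le_normY) auto
    also have "\<dots> \<le> (2 * \<bar>K\<bar> + 1) * normY g"
      using normY_nonneg[OF \<open>g \<in> Yspace\<close>] by (simp add: distrib_right)
    finally show ?thesis .
  qed
  then show ?thesis by (intro exI[of _ "2 * \<bar>K\<bar> + 1"]) auto
qed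

end
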